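(* Let $\mathcal{T}$ be a triangulated category, $s\colon S\to T$ a morphism and $X\xleftarrow{x}T\xrightarrow{y}Y$ a span in $\mathcal{T}$. Let $X+_SY$ be a homotopy pushout of $X\xleftarrow{xs}S\xrightarrow{ys}Y$ and $X+_TY$ a homotopy pushout of $X\xleftarrow{x}T\xrightarrow{y}Y$. Then there exists a morphism $X+_SY\to X+_TY$ whose cone is isomorphic to $\Sigma\operatorname{cone}(s)$.
   Context: A commutative square with $g\colon T\to V$, $f\colon T\to U$, $f'\colon V\to P$, $g'\colon U\to P$ is homotopy cartesian if there is an exact triangle $T\xrightarrow{\binom{f}{-g}}U\oplus V\xrightarrow{(g'\ f')}P\to\Sigma T$. Then $P$ (with the maps $g',f'$) is called a homotopy pushout of the span $U\xleftarrow{f}T\xrightarrow{g}V$; it exists and is unique up to non-canonical isomorphism. $\operatorname{cone}(s)$ denotes the third object of an exact triangle on $s$. *)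

theory Defs
  imports Main
begin

text \<open>
  Morphisms are elements of an ambient type 'm,
  objects elements of 'o; Hom X Y is the set of morphisms X \<rightarrow> Y, and
  cmp g f denotes the composite g \<circ> f.  A triangle X \<rightarrow> Y \<rightarrow> Z \<rightarrow> \<Sigma>X is a tuple
  (X, Y, Z, u, v, w).
\<close>

record ('o, 'm) tricat =
  Ob   :: "'o set"
  Hom  :: "'o \<Rightarrow> 'o \<Rightarrow> 'm set"
  cmp  :: "'m \<Rightarrow> 'm \<Rightarrow> 'm"
  idm  :: "'o \<Rightarrow> 'm"
  pls  :: "'m \<Rightarrow> 'm \<Rightarrow> 'm"
  zer  :: "'o \<Rightarrow> 'o \<Rightarrow> 'm"
  ngt  :: "'m \<Rightarrow> 'm"
  dsum :: "'o \<Rightarrow> 'o \<Rightarrow> 'o"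
  in1  :: "'o \<Rightarrow> 'o \<Rightarrow> 'm"
  in2  :: "'o \<Rightarrow> 'o \<Rightarrow> 'm"
  pr1  :: "'o \<Rightarrow> 'o \<Rightarrow> 'm"
  pr2  :: "'o \<Rightarrow> 'o \<Rightarrow> 'm"
  shO  :: "'o \<Rightarrow> 'o"
  shM  :: "'m \<Rightarrow> 'm"
  dist :: "('o \<times> 'o \<times> 'o \<times> 'm \<times> 'm \<times> 'm) set"

definition is_category :: "('o, 'm, 'e) tricat_scheme \<Rightarrow> bool" where
  "is_category C \<longleftrightarrow>
    (\<forall>X\<in>Ob C. \<forall>Y\<in>Ob C. \<forall>Z\<in>Ob C. \<forall>f\<in>Hom C X Y. \<forall>g\<in>Hom C Y Z.
        cmp C g f \<in> Hom C X Z) \<and>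
    (\<forall>W\<in>Ob C. \<forall>X\<in>Ob C. \<forall>Y\<in>Ob C. \<forall>Z\<in>Ob C.
       \<forall>f\<in>Hom C W X. \<forall>g\<in>Hom C X Y. \<forall>h\<in>Hom C Y Z.
        cmp C h (cmp C g f) = cmp C (cmp C h g) f) \<and>
    (\<forall>X\<in>Ob C. idm C X \<in> Hom C X X) \<and>
    (\<forall>X\<in>Ob C. \<forall>Y\<in>Ob C. \<forall>f\<in>Hom C X Y.
        cmp C f (idm C X) = f \<and> cmp C (idm C Y) f = f)"

definition is_preadditive :: "('o, 'm, 'e) tricat_scheme \<Rightarrow> bool" where
  "is_preadditive C \<longleftrightarrow> is_category C \<and>
    (\<forall>X\<in>Ob C. \<forall>Y\<in>Ob C.
       zer C X Y \<in> Hom C X Y \<and>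
       (\<forall>f\<in>Hom C X Y. \<forall>g\<in>Hom C X Y. pls C f g \<in> Hom C X Y) \<and>
       (\<forall>f\<in>Hom C X Y. ngt C f \<in> Hom C X Y) \<and>
       (\<forall>f\<in>Hom C X Y. \<forall>g\<in>Hom C X Y. \<forall>h\<in>Hom C X Y.
          pls C (pls C f g) h = pls C f (pls C g h)) \<and>
       (\<forall>f\<in>Hom C X Y. \<forall>g\<in>Hom C X Y. pls C f g = pls C g f) \<and>
       (\<forall>f\<in>Hom C X Y. pls C f (zer C X Y) = f) \<and>
       (\<forall>f\<in>Hom C X Y. pls C f (ngt C f) = zer C X Y)) \<and>
    (\<forall>X\<in>Ob C. \<forall>Y\<in>Ob C. \<forall>Z\<in>Ob C.
       (\<forall>f\<in>Hom C X Y. \<forall>g\<in>Hom C Y Z. \<forall>g'\<in>Hom C Y Z.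
          cmp C (pls C g g') f = pls C (cmp C g f) (cmp C g' f)) \<and>
       (\<forall>f\<in>Hom C X Y. \<forall>f'\<in>Hom C X Y. \<forall>g\<in>Hom C Y Z.
          cmp C g (pls C f f') = pls C (cmp C g f) (cmp C g f')))"

definition is_zero_obj :: "('o, 'm, 'e) tricat_scheme \<Rightarrow> 'o \<Rightarrow> bool" where
  "is_zero_obj C Z \<longleftrightarrow> Z \<in> Ob C \<and>
     (\<forall>X\<in>Ob C. Hom C Z X = {zer C Z X} \<and> Hom C X Z = {zer C X Z})"

definition is_additive :: "('o, 'm, 'e) tricat_scheme \<Rightarrow> bool" where
  "is_additive C \<longleftrightarrow> is_preadditive C \<and> (\<exists>Z. is_zero_obj C Z) \<and>
    (\<forall>U\<in>Ob C. \<forall>V\<in>Ob C.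
       dsum C U V \<in> Ob C \<and>
       in1 C U V \<in> Hom C U (dsum C U V) \<and> in2 C U V \<in> Hom C V (dsum C U V) \<and>
       pr1 C U V \<in> Hom C (dsum C U V) U \<and> pr2 C U V \<in> Hom C (dsum C U V) V \<and>
       cmp C (pr1 C U V) (in1 C U V) = idm C U \<and>
       cmp C (pr2 C U V) (in2 C U V) = idm C V \<and>
       cmp C (pr1 C U V) (in2 C U V) = zer C V U \<and>
       cmp C (pr2 C U V) (in1 C U V) = zer C U V \<and>
       pls C (cmp C (in1 C U V) (pr1 C U V)) (cmp C (in2 C U V) (pr2 C U V))
         = idm C (dsum C U V))"

definition is_iso :: "('o, 'm, 'e) tricat_scheme \<Rightarrow> 'o \<Rightarrow> 'o \<Rightarrow> 'm \<Rightarrow> bool" where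
  "is_iso C X Y f \<longleftrightarrow> f \<in> Hom C X Y \<and>
     (\<exists>g\<in>Hom C Y X. cmp C g f = idm C X \<and> cmp C f g = idm C Y)"

definition isomorphic :: "('o, 'm, 'e) tricat_scheme \<Rightarrow> 'o \<Rightarrow> 'o \<Rightarrow> bool" where
  "isomorphic C X Y \<longleftrightarrow> (\<exists>f. is_iso C X Y f)"

definition is_shift :: "('o, 'm, 'e) tricat_scheme \<Rightarrow> bool" where
  "is_shift C \<longleftrightarrow>
    (\<forall>X\<in>Ob C. shO C X \<in> Ob C) \<and>
    (\<forall>X\<in>Ob C. \<forall>Y\<in>Ob C. \<forall>f\<in>Hom C X Y. shM C f \<in> Hom C (shO C X) (shO C Y)) \<and>
    (\<forall>X\<in>Ob C. shM C (idm C X) = idm C (shO C X)) \<and>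
    (\<forall>X\<in>Ob C. \<forall>Y\<in>Ob C. \<forall>Z\<in>Ob C. \<forall>f\<in>Hom C X Y. \<forall>g\<in>Hom C Y Z.
        shM C (cmp C g f) = cmp C (shM C g) (shM C f)) \<and>
    (\<forall>X\<in>Ob C. \<forall>Y\<in>Ob C. \<forall>f\<in>Hom C X Y. \<forall>g\<in>Hom C X Y.
        shM C (pls C f g) = pls C (shM C f) (shM C g)) \<and>
    (\<forall>X\<in>Ob C. \<forall>Y\<in>Ob C. bij_betw (shM C) (Hom C X Y) (Hom C (shO C X) (shO C Y))) \<and>
    (\<forall>Y\<in>Ob C. \<exists>X\<in>Ob C. isomorphic C (shO C X) Y)"

definition is_triangle ::
  "('o, 'm, 'e) tricat_scheme \<Rightarrow> 'o \<times> 'o \<times> 'o \<times> 'm \<times> 'm \<times> 'm \<Rightarrow> bool" where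
  "is_triangle C t \<longleftrightarrow> (case t of (X, Y, Z, u, v, w) \<Rightarrow>
     X \<in> Ob C \<and> Y \<in> Ob C \<and> Z \<in> Ob C \<and>
     u \<in> Hom C X Y \<and> v \<in> Hom C Y Z \<and> w \<in> Hom C Z (shO C X))"

definition tri_morph ::
  "('o, 'm, 'e) tricat_scheme \<Rightarrow> 'o \<times> 'o \<times> 'o \<times> 'm \<times> 'm \<times> 'm
     \<Rightarrow> 'o \<times> 'o \<times> 'o \<times> 'm \<times> 'm \<times> 'm \<Rightarrow> 'm \<Rightarrow> 'm \<Rightarrow> 'm \<Rightarrow> bool" where
  "tri_morph C t t' a b c \<longleftrightarrow> (case t of (X, Y, Z, u, v, w) \<Rightarrow>
     case t' of (X', Y', Z', u', v', w') \<Rightarrow>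
       a \<in> Hom C X X' \<and> b \<in> Hom C Y Y' \<and> c \<in> Hom C Z Z' \<and>
       cmp C b u = cmp C u' a \<and> cmp C c v = cmp C v' b \<and>
       cmp C (shM C a) w = cmp C w' c)"

definition tri_iso ::
  "('o, 'm, 'e) tricat_scheme \<Rightarrow> 'o \<times> 'o \<times> 'o \<times> 'm \<times> 'm \<times> 'm
     \<Rightarrow> 'o \<times> 'o \<times> 'o \<times> 'm \<times> 'm \<times> 'm \<Rightarrow> bool" where
  "tri_iso C t t' \<longleftrightarrow> (case t of (X, Y, Z, u, v, w) \<Rightarrow>
     case t' of (X', Y', Z', u', v', w') \<Rightarrow>
       (\<exists>a b c. tri_morph C t t' a b c \<and>
          is_iso C X X' a \<and> is_iso C Y Y' b \<and> is_iso C Z Z' c))"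

text \<open>Triangulated category: axioms TR1--TR4 (octahedral axiom as in the Stacks project).\<close>
definition triangulated :: "('o, 'm, 'e) tricat_scheme \<Rightarrow> bool" where
  "triangulated C \<longleftrightarrow> is_additive C \<and> is_shift C \<and>
    (\<forall>t\<in>dist C. is_triangle C t) \<and>
    \<comment> \<open>TR1\<close>
    (\<forall>t t'. t \<in> dist C \<and> is_triangle C t' \<and> tri_iso C t t' \<longrightarrow> t' \<in> dist C) \<and>
    (\<forall>X\<in>Ob C. \<forall>Z. is_zero_obj C Z \<longrightarrow>
        (X, X, Z, idm C X, zer C X Z, zer C Z (shO C X)) \<in> dist C) \<and>
    (\<forall>X\<in>Ob C. \<forall>Y\<in>Ob C. \<forall>u\<in>Hom C X Y. \<exists>Z v w. (X, Y, Z, u, v, w) \<in> dist C) \<and>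
    \<comment> \<open>TR2\<close>
    (\<forall>X Y Z u v w. (X, Y, Z, u, v, w) \<in> dist C \<longleftrightarrow>
        X \<in> Ob C \<and> Y \<in> Ob C \<and> u \<in> Hom C X Y \<and>
        (Y, Z, shO C X, v, w, ngt C (shM C u)) \<in> dist C) \<and>
    \<comment> \<open>TR3\<close>
    (\<forall>X Y Z u v w X' Y' Z' u' v' w' a b.
        (X, Y, Z, u, v, w) \<in> dist C \<and> (X', Y', Z', u', v', w') \<in> dist C \<and>
        a \<in> Hom C X X' \<and> b \<in> Hom C Y Y' \<and> cmp C b u = cmp C u' a \<longrightarrow>
        (\<exists>c. tri_morph C (X, Y, Z, u, v, w) (X', Y', Z', u', v', w') a b c)) \<and>
    \<comment> \<open>TR4 (octahedral axiom)\<close>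
    (\<forall>X Y Z Q1 Q2 Q3 f g p1 d1 p2 d2 p3 d3.
        (X, Y, Q1, f, p1, d1) \<in> dist C \<and> (Y, Z, Q2, g, p2, d2) \<in> dist C \<and>
        (X, Z, Q3, cmp C g f, p3, d3) \<in> dist C \<longrightarrow>
        (\<exists>a b. (Q1, Q3, Q2, a, b, cmp C (shM C p1) d2) \<in> dist C \<and>
           cmp C a p1 = cmp C p3 g \<and> cmp C d3 a = d1 \<and>
           cmp C d2 b = cmp C (shM C f) d3 \<and> cmp C b p3 = p2))"

definition homotopy_pushout ::
  "('o, 'm, 'e) tricat_scheme \<Rightarrow> 'o \<Rightarrow> 'o \<Rightarrow> 'o \<Rightarrow> 'm \<Rightarrow> 'm \<Rightarrow> 'o \<Rightarrow> 'm \<Rightarrow> 'm \<Rightarrow> bool" where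
  "homotopy_pushout C T U V f g P g' f' \<longleftrightarrow>
     f \<in> Hom C T U \<and> g \<in> Hom C T V \<and> P \<in> Ob C \<and>
     g' \<in> Hom C U P \<and> f' \<in> Hom C V P \<and>
     (\<exists>w. (T, dsum C U V, P,
            pls C (cmp C (in1 C U V) f) (cmp C (in2 C U V) (ngt C g)),
            pls C (cmp C g' (pr1 C U V)) (cmp C f' (pr2 C U V)),
            w) \<in> dist C)"

end

theory Submission
  imports Defs
begin

text \<open>
  The base (x s; -y s) of the homotopy pushout of X <- S -> Y is the composite of the
  base (x; -y) of the homotopy pushout of X <- T -> Y with s.  So X +_S Y and
  X +_T Y are cones of h s and of h, for h = (x; -y), and the octahedral axiom for
  S -s-> T -h-> X \<oplus> Y yields an exact triangle cone(s) -> X +_S Y -> X +_T Y -> \<Sigma>cone(s);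
  rotating it gives the required morphism with cone \<Sigma>cone(s).
\<close>

lemma cmp_in_Hom:
  assumes "is_category C" "X \<in> Ob C" "Y \<in> Ob C" "Z \<in> Ob C" "f \<in> Hom C X Y" "g \<in> Hom C Y Z"
  shows "cmp C g f \<in> Hom C X Z"
  using assms unfolding is_category_def by blast

lemma cmp_assoc:
  assumes "is_category C" "W \<in> Ob C" "X \<in> Ob C" "Y \<in> Ob C" "Z \<in> Ob C"
    and "f \<in> Hom C W X" "g \<in> Hom C X Y" "h \<in> Hom C Y Z"
  shows "cmp C (cmp C h g) f = cmp C h (cmp C g f)"
  using assms unfolding is_category_def by (elim conjE) (metis (no_types))

lemma isomorphic_refl:
  assumes "is_category C" "X \<in> Ob C"
  shows "isomorphic C X X"
  using assms unfolding is_category_def isomorphic_def is_iso_def by blast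

lemma preadditive_is_category: "is_preadditive C \<Longrightarrow> is_category C"
  unfolding is_preadditive_def by blast

lemma
  assumes "is_preadditive C" "X \<in> Ob C" "Y \<in> Ob C"
  shows zer_in_Hom: "zer C X Y \<in> Hom C X Y"
    and ngt_in_Hom: "f \<in> Hom C X Y \<Longrightarrow> ngt C f \<in> Hom C X Y"
    and pls_assoc: "\<lbrakk>f \<in> Hom C X Y; g \<in> Hom C X Y; h \<in> Hom C X Y\<rbrakk> \<Longrightarrow>
      pls C (pls C f g) h = pls C f (pls C g h)"
    and pls_commute: "\<lbrakk>f \<in> Hom C X Y; g \<in> Hom C X Y\<rbrakk> \<Longrightarrow> pls C f g = pls C g f"
    and pls_zer: "f \<in> Hom C X Y \<Longrightarrow> pls C f (zer C X Y) = f"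
    and pls_ngt: "f \<in> Hom C X Y \<Longrightarrow> pls C f (ngt C f) = zer C X Y"
  using assms unfolding is_preadditive_def by blast+

lemma cmp_pls_left:
  assumes "is_preadditive C" "X \<in> Ob C" "Y \<in> Ob C" "Z \<in> Ob C" "f \<in> Hom C X Y"
    and "g \<in> Hom C Y Z" "g' \<in> Hom C Y Z"
  shows "cmp C (pls C g g') f = pls C (cmp C g f) (cmp C g' f)"
  using assms unfolding is_preadditive_def by (elim conjE) (metis (no_types))

lemma pls_eq_zer_imp_eq_ngt:
  assumes "is_preadditive C" "X \<in> Ob C" "Y \<in> Ob C" "a \<in> Hom C X Y" "b \<in> Hom C X Y"
    and "pls C a b = zer C X Y"
  shows "b = ngt C a"
proof -
  note hom = zer_in_Hom[OF assms(1-3)] ngt_in_Hom[OF assms(1-3)]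
  have "b = pls C b (pls C a (ngt C a))"
    using assms by (simp add: pls_ngt pls_zer)
  also have "\<dots> = pls C (pls C b a) (ngt C a)"
    using assms hom by (simp add: pls_assoc)
  also have "\<dots> = pls C (pls C a b) (ngt C a)"
    using assms by (simp add: pls_commute)
  also have "\<dots> = ngt C a"
    using assms hom by (simp add: pls_commute pls_zer)
  finally show ?thesis .
qed

lemma pls_self_eq_imp_zer:
  assumes "is_preadditive C" "X \<in> Ob C" "Y \<in> Ob C" "a \<in> Hom C X Y"
    and "pls C a a = a"
  shows "a = zer C X Y"
proof -
  have na: "ngt C a \<in> Hom C X Y" using assms by (simp add: ngt_in_Hom)
  have "a = pls C a (pls C a (ngt C a))"
    using assms by (simp add: pls_ngt pls_zer)
  also have "\<dots> = pls C (pls C a a) (ngt C a)"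
    using pls_assoc[OF assms(1-4) assms(4) na] by simp
  also have "\<dots> = zer C X Y"
    using assms by (simp add: pls_ngt)
  finally show ?thesis .
qed

lemma cmp_zer_left:
  assumes "is_preadditive C" "S \<in> Ob C" "T \<in> Ob C" "Y \<in> Ob C" "s \<in> Hom C S T"
  shows "cmp C (zer C T Y) s = zer C S Y"
proof (rule pls_self_eq_imp_zer[OF assms(1,2,4)])
  have z: "zer C T Y \<in> Hom C T Y" using assms by (simp add: zer_in_Hom)
  show "cmp C (zer C T Y) s \<in> Hom C S Y"
    using cmp_in_Hom[OF preadditive_is_category assms(2-5) z] assms(1) .
  show "pls C (cmp C (zer C T Y) s) (cmp C (zer C T Y) s) = cmp C (zer C T Y) s"
    using cmp_pls_left[OF assms(1-5) z z, symmetric] assms z by (simp add: pls_zer)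
qed

lemma cmp_ngt_left:
  assumes "is_preadditive C" "S \<in> Ob C" "T \<in> Ob C" "Y \<in> Ob C"
    and "s \<in> Hom C S T" "y \<in> Hom C T Y"
  shows "cmp C (ngt C y) s = ngt C (cmp C y s)"
proof (rule pls_eq_zer_imp_eq_ngt[OF assms(1,2,4)])
  have cat: "is_category C" using assms(1) by (rule preadditive_is_category)
  have ny: "ngt C y \<in> Hom C T Y" using assms by (simp add: ngt_in_Hom)
  show "cmp C y s \<in> Hom C S Y" using cmp_in_Hom[OF cat assms(2-6)] .
  show "cmp C (ngt C y) s \<in> Hom C S Y" using cmp_in_Hom[OF cat assms(2-5) ny] .
  have "pls C (cmp C y s) (cmp C (ngt C y) s) = cmp C (pls C y (ngt C y)) s"
    using cmp_pls_left[OF assms(1-6) ny] by simp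
  also have "\<dots> = zer C S Y"
    using assms by (simp add: pls_ngt cmp_zer_left)
  finally show "pls C (cmp C y s) (cmp C (ngt C y) s) = zer C S Y" .
qed

lemma triangulated_is_additive: "triangulated C \<Longrightarrow> is_additive C"
  unfolding triangulated_def by blast

lemma additive_is_preadditive: "is_additive C \<Longrightarrow> is_preadditive C"
  unfolding is_additive_def by blast

lemma triangulated_is_preadditive: "triangulated C \<Longrightarrow> is_preadditive C"
  by (intro additive_is_preadditive triangulated_is_additive)

lemma triangulated_is_shift: "triangulated C \<Longrightarrow> is_shift C"
  unfolding triangulated_def by blast

lemma dist_is_triangle:
  assumes "triangulated C" "(X, Y, Z, u, v, w) \<in> dist C"
  shows "Z \<in> Ob C" "u \<in> Hom C X Y"
  using assms unfolding triangulated_def is_triangle_def by fastforce+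

lemma shO_in_Ob: "is_shift C \<Longrightarrow> X \<in> Ob C \<Longrightarrow> shO C X \<in> Ob C"
  unfolding is_shift_def by blast

lemma dist_triangle_exists:
  assumes "triangulated C" "X \<in> Ob C" "Y \<in> Ob C" "u \<in> Hom C X Y"
  obtains Z v w where "(X, Y, Z, u, v, w) \<in> dist C"
  using assms unfolding triangulated_def by (elim conjE) (metis (no_types))

lemma dist_rotate:
  assumes "triangulated C" "(X, Y, Z, u, v, w) \<in> dist C"
  shows "(Y, Z, shO C X, v, w, ngt C (shM C u)) \<in> dist C"
  using assms unfolding triangulated_def by (elim conjE) (metis (no_types))

lemma octahedral:
  assumes "triangulated C"
    and "(X, Y, Q1, f, p1, d1) \<in> dist C" "(Y, Z, Q2, g, p2, d2) \<in> dist C"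
    and "(X, Z, Q3, cmp C g f, p3, d3) \<in> dist C"
  obtains a b where "(Q1, Q3, Q2, a, b, cmp C (shM C p1) d2) \<in> dist C"
  using assms unfolding triangulated_def by (elim conjE) (metis (no_types))

lemma dist_cone_of_cmp_to_cone:
  assumes "triangulated C"
    and "(S, T, Q, s, v, w) \<in> dist C"
    and "(T, D, P, h, p, d) \<in> dist C"
    and "(S, D, P', cmp C h s, p', d') \<in> dist C"
  shows "\<exists>\<phi> v w. (P', P, shO C Q, \<phi>, v, w) \<in> dist C"
proof -
  obtain a b where "(Q, P', P, a, b, cmp C (shM C v) d) \<in> dist C"
    using octahedral[OF assms] .
  from dist_rotate[OF assms(1) this] show ?thesis by blast
qed

definition pushout_base :: "('o, 'm, 'e) tricat_scheme \<Rightarrow> 'o \<Rightarrow> 'o \<Rightarrow> 'm \<Rightarrow> 'm \<Rightarrow> 'm" where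
  "pushout_base C U V f g = pls C (cmp C (in1 C U V) f) (cmp C (in2 C U V) (ngt C g))"

lemma homotopy_pushout_dist:
  assumes "homotopy_pushout C T U V f g P g' f'"
  obtains p w where "(T, dsum C U V, P, pushout_base C U V f g, p, w) \<in> dist C"
  using assms unfolding homotopy_pushout_def pushout_base_def by blast

lemma pushout_base_cmp:
  assumes "is_additive C" "S \<in> Ob C" "T \<in> Ob C" "U \<in> Ob C" "V \<in> Ob C"
    and "s \<in> Hom C S T" "f \<in> Hom C T U" "g \<in> Hom C T V"
  shows "pushout_base C U V (cmp C f s) (cmp C g s) = cmp C (pushout_base C U V f g) s"
proof -
  have pre: "is_preadditive C" using assms(1) by (rule additive_is_preadditive)
  have cat: "is_category C" using pre by (rule preadditive_is_category)
  have D: "dsum C U V \<in> Ob C" and i1: "in1 C U V \<in> Hom C U (dsum C U V)"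
    and i2: "in2 C U V \<in> Hom C V (dsum C U V)"
    using assms(1,4,5) unfolding is_additive_def by blast+
  have ng: "ngt C g \<in> Hom C T V" using pre assms(3,5,8) by (rule ngt_in_Hom)
  have "cmp C (pushout_base C U V f g) s
      = pls C (cmp C (cmp C (in1 C U V) f) s) (cmp C (cmp C (in2 C U V) (ngt C g)) s)"
    unfolding pushout_base_def
    using cmp_pls_left[OF pre assms(2,3) D assms(6)] cmp_in_Hom[OF cat assms(3,4) D assms(7) i1]
      cmp_in_Hom[OF cat assms(3,5) D ng i2] by blast
  also have "\<dots> = pls C (cmp C (in1 C U V) (cmp C f s)) (cmp C (in2 C U V) (cmp C (ngt C g) s))"
    using cmp_assoc[OF cat assms(2,3,4) D assms(6,7) i1] cmp_assoc[OF cat assms(2,3,5) D assms(6) ng i2]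
    by simp
  also have "\<dots> = pushout_base C U V (cmp C f s) (cmp C g s)"
    unfolding pushout_base_def using cmp_ngt_left[OF pre assms(2,3,5,6,8)] by simp
  finally show ?thesis by simp
qed

theorem lemma2p6:
  fixes C :: "('o, 'm) tricat"
  assumes "triangulated C"
    and "S \<in> Ob C" "T \<in> Ob C" "X \<in> Ob C" "Y \<in> Ob C"
    and "s \<in> Hom C S T" "x \<in> Hom C T X" "y \<in> Hom C T Y"
    and "homotopy_pushout C S X Y (cmp C x s) (cmp C y s) PS gS fS"
    and "homotopy_pushout C T X Y x y PT gT fT"
  shows "\<exists>\<phi>\<in>Hom C PS PT. \<exists>K v w. (PS, PT, K, \<phi>, v, w) \<in> dist C \<and>
           (\<exists>Cs v' w'. (S, T, Cs, s, v', w') \<in> dist C \<and> isomorphic C K (shO C Cs))"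
proof -
  obtain Cs v' w' where cone_s: "(S, T, Cs, s, v', w') \<in> dist C"
    using dist_triangle_exists[OF assms(1-3,6)] .
  obtain pT dT where "(T, dsum C X Y, PT, pushout_base C X Y x y, pT, dT) \<in> dist C"
    using homotopy_pushout_dist[OF assms(10)] .
  moreover obtain pS dS
    where "(S, dsum C X Y, PS, cmp C (pushout_base C X Y x y) s, pS, dS) \<in> dist C"
    using homotopy_pushout_dist[OF assms(9)]
    unfolding pushout_base_cmp[OF triangulated_is_additive[OF assms(1)] assms(2-8)] .
  ultimately obtain \<phi> v w where tri: "(PS, PT, shO C Cs, \<phi>, v, w) \<in> dist C"
    using dist_cone_of_cmp_to_cone[OF assms(1) cone_s] by blast
  have "isomorphic C (shO C Cs) (shO C Cs)"
    using shO_in_Ob[OF triangulated_is_shift dist_is_triangle(1)] cone_s assms(1)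
    by (intro isomorphic_refl preadditive_is_category triangulated_is_preadditive)
  with tri cone_s dist_is_triangle(2)[OF assms(1) tri] show ?thesis by blast
qed

end
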